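(* Let $\hat n_1,\hat n_2,\hat n_3\in\mathbb{R}^3$ be unit vectors, $\eta\in[0,1]$, and $\mathcal{M}_k$ the qubit POVM $\{\tfrac12\mathbf{1}+\tfrac\eta2X_k\vec\sigma\cdot\hat n_k\}_{X_k\in\{+1,-1\}}$, and suppose each pair $\mathcal{M}_i,\mathcal{M}_j$ ($i\neq j$) admits a joint measurement $\mathcal{M}_{ij}$. Then in any generalized-noncontextual ontological model of quantum theory, for every ontic state $\lambda$ (and hence for every preparation), $$R_3=\frac13\sum_{i<j}p(X_i\neq X_j|\mathcal{M}_{ij};\lambda)\leq1-\frac\eta3.$$
   Context: An ontological model of quantum theory specifies ontic states $\lambda$, distributions $p(\lambda|P)$ for preparations and response functions $p(X|M;\lambda)$ for measurement procedures reproducing quantum statistics. It is measurement-noncontextual if procedures realizing the same POVM have identical response functions, preparation-noncontextual if procedures realizing the same density operator have identical distributions, and generalized-noncontextual if both hold. A joint measurement of POVMs $\{E^i_{X_i}\},\{E^j_{X_j}\}$ is a POVM $\{F_{X_iX_j}\}$ with $\sum_{X_j}F_{X_iX_j}=E^i_{X_i}$ and $\sum_{X_i}F_{X_iX_j}=E^j_{X_j}$. *)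

theory Defs
  imports "HOL-Probability.Probability"
begin

type_synonym cmat = "complex^2^2"

text \<open>Measurement outcomes are labelled by lists of integers: a single
  two-outcome measurement has outcomes [1], [-1]; a joint measurement has
  outcomes [x_i, x_j].\<close>
type_synonym outcome = "int list"

definition pauli :: "3 \<Rightarrow> cmat" where
  "pauli k =
     (if k = 0 then (\<chi> i j. if i = j then 0 else 1)
      else if k = 1 then (\<chi> i j. if i = j then 0 else if i = 0 then - \<i> else \<i>)
      else (\<chi> i j. if i \<noteq> j then 0 else if i = 0 then 1 else -1))"

definition sigma_dot :: "real^3 \<Rightarrow> cmat" where
  "sigma_dot n = (\<Sum>k\<in>UNIV. n$k *\<^sub>R pauli k)"

definition adj :: "cmat \<Rightarrow> cmat" where
  "adj A = (\<chi> i j. cnj (A$j$i))"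

definition psd :: "cmat \<Rightarrow> bool" where
  "psd A \<longleftrightarrow> A = adj A \<and>
     (\<forall>v::complex^2. 0 \<le> Re (\<Sum>i\<in>UNIV. cnj (v$i) * (A *v v)$i))"

definition is_effect :: "cmat \<Rightarrow> bool" where
  "is_effect E \<longleftrightarrow> psd E \<and> psd (mat 1 - E)"

definition is_density :: "cmat \<Rightarrow> bool" where
  "is_density \<rho> \<longleftrightarrow> psd \<rho> \<and> trace \<rho> = 1"

definition noisy_effect :: "real \<Rightarrow> real^3 \<Rightarrow> int \<Rightarrow> cmat" where
  "noisy_effect \<eta> n x = (1/2) *\<^sub>R mat 1 + (\<eta> / 2 * of_int x) *\<^sub>R sigma_dot n"

definition is_joint_measurement ::
  "(outcome \<Rightarrow> cmat) \<Rightarrow> (int \<Rightarrow> cmat) \<Rightarrow> (int \<Rightarrow> cmat) \<Rightarrow> bool" where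
  "is_joint_measurement F Ei Ej \<longleftrightarrow>
     (\<forall>a\<in>{1,-1}. \<forall>b\<in>{1,-1}. is_effect (F [a,b])) \<and>
     (\<Sum>a\<in>{1,-1}. \<Sum>b\<in>{1,-1}. F [a,b]) = mat 1 \<and>
     (\<forall>a\<in>{1,-1}. (\<Sum>b\<in>{1,-1}. F [a,b]) = Ei a) \<and>
     (\<forall>b\<in>{1,-1}. (\<Sum>a\<in>{1,-1}. F [a,b]) = Ej b)"

definition qubit_operational_theory ::
  "('p \<Rightarrow> cmat) \<Rightarrow> ('m \<Rightarrow> outcome set) \<Rightarrow> ('m \<Rightarrow> outcome \<Rightarrow> cmat) \<Rightarrow> bool" where
  "qubit_operational_theory dens outs povm \<longleftrightarrow>
     (\<forall>P. is_density (dens P)) \<and>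
     (\<forall>\<rho>. is_density \<rho> \<longrightarrow> (\<exists>P. dens P = \<rho>)) \<and>
     (\<forall>M. finite (outs M) \<and> outs M \<noteq> {} \<and> (\<forall>x\<in>outs M. is_effect (povm M x)) \<and>
          (\<forall>x. x \<notin> outs M \<longrightarrow> povm M x = 0) \<and> sum (povm M) (outs M) = mat 1) \<and>
     (\<forall>Os E. finite Os \<and> Os \<noteq> {} \<and> (\<forall>x\<in>Os. is_effect (E x)) \<and> sum E Os = mat 1 \<longrightarrow>
          (\<exists>M. outs M = Os \<and> (\<forall>x\<in>Os. povm M x = E x)))"

text \<open>Ontic space: measurable space L; mu P is the distribution over ontic
  states for preparation P; xi M x l is the response function p(x|M;l).\<close>
definition ontological_model ::
  "'l measure \<Rightarrow> ('p \<Rightarrow> cmat) \<Rightarrow> ('m \<Rightarrow> outcome set) \<Rightarrow> ('m \<Rightarrow> outcome \<Rightarrow> cmat) \<Rightarrow>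
   ('p \<Rightarrow> 'l measure) \<Rightarrow> ('m \<Rightarrow> outcome \<Rightarrow> 'l \<Rightarrow> real) \<Rightarrow> bool" where
  "ontological_model L dens outs povm \<mu> \<xi> \<longleftrightarrow>
     (\<forall>P. prob_space (\<mu> P) \<and> sets (\<mu> P) = sets L) \<and>
     (\<forall>M x. \<xi> M x \<in> borel_measurable L) \<and>
     (\<forall>M x l. 0 \<le> \<xi> M x l) \<and>
     (\<forall>M x l. x \<notin> outs M \<longrightarrow> \<xi> M x l = 0) \<and>
     (\<forall>M l. l \<in> space L \<longrightarrow> (\<Sum>x\<in>outs M. \<xi> M x l) = 1) \<and>
     (\<forall>P M x. x \<in> outs M \<longrightarrow>
        (\<integral>l. \<xi> M x l \<partial>\<mu> P) = Re (trace (dens P ** povm M x))) \<and>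
     (\<forall>P1 P2 t. 0 \<le> t \<and> t \<le> 1 \<longrightarrow>
        (\<exists>P. dens P = t *\<^sub>R dens P1 + (1 - t) *\<^sub>R dens P2 \<and>
             (\<forall>A\<in>sets L. measure (\<mu> P) A =
                 t * measure (\<mu> P1) A + (1 - t) * measure (\<mu> P2) A))) \<and>
     (\<forall>M1 M2 t. 0 \<le> t \<and> t \<le> 1 \<longrightarrow>
        (\<exists>M. outs M = outs M1 \<union> outs M2 \<and>
             povm M = (\<lambda>x. t *\<^sub>R povm M1 x + (1 - t) *\<^sub>R povm M2 x) \<and>
             \<xi> M = (\<lambda>x l. t * \<xi> M1 x l + (1 - t) * \<xi> M2 x l))) \<and>
     (\<forall>M (f :: outcome \<Rightarrow> outcome).
        (\<exists>M'. outs M' = f ` outs M \<and>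
              povm M' = (\<lambda>y. \<Sum>x\<in>{x\<in>outs M. f x = y}. povm M x) \<and>
              \<xi> M' = (\<lambda>y l. \<Sum>x\<in>{x\<in>outs M. f x = y}. \<xi> M x l)))"

definition preparation_noncontextual ::
  "('p \<Rightarrow> cmat) \<Rightarrow> ('p \<Rightarrow> 'l measure) \<Rightarrow> bool" where
  "preparation_noncontextual dens \<mu> \<longleftrightarrow>
     (\<forall>P1 P2. dens P1 = dens P2 \<longrightarrow> \<mu> P1 = \<mu> P2)"

definition measurement_noncontextual ::
  "('m \<Rightarrow> outcome set) \<Rightarrow> ('m \<Rightarrow> outcome \<Rightarrow> cmat) \<Rightarrow> ('m \<Rightarrow> outcome \<Rightarrow> 'l \<Rightarrow> real) \<Rightarrow> bool" where
  "measurement_noncontextual outs povm \<xi> \<longleftrightarrow>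
     (\<forall>M1 M2. outs M1 = outs M2 \<and> povm M1 = povm M2 \<longrightarrow> \<xi> M1 = \<xi> M2)"

definition generalized_noncontextual ::
  "('p \<Rightarrow> cmat) \<Rightarrow> ('m \<Rightarrow> outcome set) \<Rightarrow> ('m \<Rightarrow> outcome \<Rightarrow> cmat) \<Rightarrow>
   ('p \<Rightarrow> 'l measure) \<Rightarrow> ('m \<Rightarrow> outcome \<Rightarrow> 'l \<Rightarrow> real) \<Rightarrow> bool" where
  "generalized_noncontextual dens outs povm \<mu> \<xi> \<longleftrightarrow>
     preparation_noncontextual dens \<mu> \<and> measurement_noncontextual outs povm \<xi>"

definition prob_neq :: "('m \<Rightarrow> outcome \<Rightarrow> 'l \<Rightarrow> real) \<Rightarrow> 'm \<Rightarrow> 'l \<Rightarrow> real" where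
  "prob_neq \<xi> M l = \<xi> M [1, -1] l + \<xi> M [-1, 1] l"

end

theory Submission
  imports Defs
begin

text \<open>Generalized noncontextuality forces projective qubit measurements to be outcome-deterministic:
  the maximally mixed state is the even mixture of the two eigenstates of \<open>\<sigma>\<cdot>n\<close>, on each of which one
  outcome has probability zero, and also of \<open>\<rho>\<close> and \<open>1 - \<rho>\<close> for every state \<open>\<rho>\<close>; by preparation
  noncontextuality the indeterministic ontic states are therefore null for every preparation.
  Measurement noncontextuality then fixes the response of every realisation of the noisy POVM, in
  particular of both marginals of a joint measurement, as the \<open>(1 + \<eta>)/2\<close>-mixture of a deterministic
  response and its flip. Of the three deterministic outcomes two agree, the corresponding joint
  measurement anticorrelates with probability at most \<open>1 - \<eta>\<close>, and the other two pairs contribute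
  at most \<open>1\<close> each.\<close>

lemma UNIV_2_zero_one: "(UNIV :: 2 set) = {0, 1}"
proof -
  have "(2::2) = 0" by simp
  then have "x \<in> {0, 1}" for x :: 2
    using exhaust_2[of x] by auto
  then show ?thesis by blast
qed

lemma sum_UNIV_2_zero_one: "sum f (UNIV :: 2 set) = f 0 + f 1"
  unfolding UNIV_2_zero_one by simp

lemma UNIV_3_zero_one_two: "(UNIV :: 3 set) = {0, 1, 2}"
proof -
  have "(3::3) = 0" by simp
  then have "x \<in> {0, 1, 2}" for x :: 3
    using exhaust_3[of x] by auto
  then show ?thesis by blast
qed

lemma sum_UNIV_3_zero_one_two: "sum f (UNIV :: 3 set) = f 0 + f 1 + f 2"
  unfolding UNIV_3_zero_one_two by (simp add: add.assoc)

lemma all_2_zero_one: "(\<forall>i::2. P i) \<longleftrightarrow> P 0 \<and> P 1"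
  by (metis UNIV_2_zero_one UNIV_I insertE singletonD)

lemma cmat_eq_iff:
  "(A::cmat) = B \<longleftrightarrow> A$0$0 = B$0$0 \<and> A$0$1 = B$0$1 \<and> A$1$0 = B$1$0 \<and> A$1$1 = B$1$1"
  by (auto simp: vec_eq_iff all_2_zero_one)

lemma adj_nth: "adj A $ i $ j = cnj (A $ j $ i)"
  by (simp add: adj_def)

lemma trace_cmat: "trace (A::cmat) = A$0$0 + A$1$1"
  by (simp add: trace_def sum_UNIV_2_zero_one)

definition quad_form :: "cmat \<Rightarrow> complex \<Rightarrow> complex \<Rightarrow> real" where
  "quad_form A v0 v1 =
     Re (cnj v0 * A$0$0 * v0 + cnj v0 * A$0$1 * v1 + cnj v1 * A$1$0 * v0 + cnj v1 * A$1$1 * v1)"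

lemma quad_form_vec: "Re (\<Sum>i\<in>UNIV. cnj (v$i) * (A *v v)$i) = quad_form A (v$0) (v$1)"
  by (simp add: quad_form_def matrix_vector_mult_def sum_UNIV_2_zero_one algebra_simps)

lemma psd_iff_quad_form: "psd A \<longleftrightarrow> A = adj A \<and> (\<forall>v0 v1. 0 \<le> quad_form A v0 v1)"
proof
  assume "psd A"
  then have herm: "A = adj A" and pos: "\<forall>v::complex^2. 0 \<le> quad_form A (v$0) (v$1)"
    unfolding psd_def quad_form_vec by auto
  have "0 \<le> quad_form A v0 v1" for v0 v1
    using pos[rule_format, of "\<chi> i. if i = 0 then v0 else v1"] by simp
  with herm show "A = adj A \<and> (\<forall>v0 v1. 0 \<le> quad_form A v0 v1)" by blast
next
  assume "A = adj A \<and> (\<forall>v0 v1. 0 \<le> quad_form A v0 v1)"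
  then show "psd A" unfolding psd_def quad_form_vec by blast
qed

text \<open>As \<open>tr \<rho> = 1\<close>, the quadratic form of \<open>1 - \<rho>\<close> at \<open>(v0, v1)\<close> is that of \<open>\<rho>\<close> at the orthogonal
  vector \<open>(cnj v1, - cnj v0)\<close>.\<close>
lemma is_density_complement:
  assumes "is_density \<rho>"
  shows "is_density (mat 1 - \<rho>)"
proof -
  have tr: "\<rho>$0$0 + \<rho>$1$1 = 1" and herm: "\<rho> = adj \<rho>" and pos: "\<forall>v0 v1. 0 \<le> quad_form \<rho> v0 v1"
    using assms by (auto simp: is_density_def trace_cmat psd_iff_quad_form)
  have entries: "\<rho>$i$j = cnj (\<rho>$j$i)" for i j
    using herm by (metis adj_nth)
  have "mat 1 - \<rho> = adj (mat 1 - \<rho>)"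
    unfolding vec_eq_iff by (auto simp: adj_def mat_def entries[symmetric])
  moreover have "quad_form (mat 1 - \<rho>) v0 v1 = quad_form \<rho> (cnj v1) (- cnj v0)" for v0 v1
  proof -
    have diag: "(mat 1 - \<rho>)$0$0 = \<rho>$1$1" "(mat 1 - \<rho>)$1$1 = \<rho>$0$0"
      using tr by (simp_all add: mat_def algebra_simps)
    have offdiag: "(mat 1 - \<rho>)$0$1 = - \<rho>$0$1" "(mat 1 - \<rho>)$1$0 = - \<rho>$1$0"
      by (simp_all add: mat_def)
    show ?thesis
      unfolding quad_form_def diag offdiag by (simp add: algebra_simps)
  qed
  ultimately have "psd (mat 1 - \<rho>)"
    using pos by (simp add: psd_iff_quad_form)
  moreover have "trace (mat 1 - \<rho>) = 2 - (\<rho>$0$0 + \<rho>$1$1)"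
    by (simp add: trace_cmat mat_def)
  then have "trace (mat 1 - \<rho>) = 1"
    using tr by simp
  ultimately show ?thesis by (simp add: is_density_def)
qed

lemma sigma_dot_nth:
  "sigma_dot n $ 0 $ 0 = complex_of_real (n$2)"
  "sigma_dot n $ 0 $ 1 = complex_of_real (n$0) - \<i> * complex_of_real (n$1)"
  "sigma_dot n $ 1 $ 0 = complex_of_real (n$0) + \<i> * complex_of_real (n$1)"
  "sigma_dot n $ 1 $ 1 = - complex_of_real (n$2)"
  by (simp_all add: sigma_dot_def sum_UNIV_3_zero_one_two pauli_def, simp_all add: scaleR_conv_of_real)

lemma norm_eq_1_components: "norm (n::real^3) = 1 \<Longrightarrow> (n$0)^2 + (n$1)^2 + (n$2)^2 = 1"
  by (simp add: norm_vec_def L2_set_def sum_UNIV_3_zero_one_two)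

lemma noisy_effect_nth:
  "noisy_effect e n x $ 0 $ 0 = complex_of_real (1/2 + e/2 * of_int x * n$2)"
  "noisy_effect e n x $ 0 $ 1 =
     complex_of_real (e/2 * of_int x) * (complex_of_real (n$0) - \<i> * complex_of_real (n$1))"
  "noisy_effect e n x $ 1 $ 0 =
     complex_of_real (e/2 * of_int x) * (complex_of_real (n$0) + \<i> * complex_of_real (n$1))"
  "noisy_effect e n x $ 1 $ 1 = complex_of_real (1/2 - e/2 * of_int x * n$2)"
  by (simp_all add: noisy_effect_def mat_def sigma_dot_nth,
      (simp add: scaleR_conv_of_real algebra_simps)+)

lemma cauchy_schwarz_3:
  fixes x0 x1 x2 y0 y1 y2 :: real
  shows "(x0*y0 + x1*y1 + x2*y2)^2 \<le> (x0^2 + x1^2 + x2^2) * (y0^2 + y1^2 + y2^2)"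
proof -
  have "(x0^2 + x1^2 + x2^2) * (y0^2 + y1^2 + y2^2) - (x0*y0 + x1*y1 + x2*y2)^2
      = (x0*y1 - x1*y0)^2 + (x0*y2 - x2*y0)^2 + (x1*y2 - x2*y1)^2"
    by (simp add: power2_eq_square algebra_simps)
  moreover have "0 \<le> (x0*y1 - x1*y0)^2 + (x0*y2 - x2*y0)^2 + (x1*y2 - x2*y1)^2" by simp
  ultimately show ?thesis by linarith
qed

lemma noisy_effect_hermitian: "noisy_effect e n x = adj (noisy_effect e n x)"
  by (simp add: cmat_eq_iff adj_nth noisy_effect_nth)

text \<open>With \<open>v = (a + b\<i>, p + q\<i>)\<close>, the quadratic form is \<open>N/2 + (e x/2) (n \<bullet> w)\<close> where \<open>N = |v|\<^sup>2\<close>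
  and \<open>w\<close> is the Bloch vector of \<open>v\<close>, of length \<open>N\<close>; Cauchy-Schwarz finishes the proof.\<close>
lemma psd_noisy_effect:
  assumes "norm n = 1" "\<bar>e * of_int x\<bar> \<le> 1"
  shows "psd (noisy_effect e n x)"
proof -
  have "0 \<le> quad_form (noisy_effect e n x) v0 v1" for v0 v1
  proof -
    define a b p q where coords: "a = Re v0" "b = Im v0" "p = Re v1" "q = Im v1"
    define N where "N = a^2 + b^2 + p^2 + q^2"
    define X where "X = n$2 * (a^2 + b^2 - p^2 - q^2) + n$0 * (2*(a*p + b*q)) + n$1 * (2*(a*q - b*p))"
    have "X^2 \<le> ((n$2)^2 + (n$0)^2 + (n$1)^2) *
        ((a^2 + b^2 - p^2 - q^2)^2 + (2*(a*p + b*q))^2 + (2*(a*q - b*p))^2)"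
      unfolding X_def by (rule cauchy_schwarz_3)
    also have "\<dots> = N^2"
      using norm_eq_1_components[OF assms(1)] unfolding N_def
      by (simp add: power2_eq_square algebra_simps)
    finally have "\<bar>X\<bar> \<le> N"
      using abs_le_square_iff[of X N] unfolding N_def by simp
    then have "\<bar>e * of_int x\<bar> * \<bar>X\<bar> \<le> 1 * N"
      using assms(2) by (intro mult_mono) auto
    then have "- N \<le> e * of_int x * X"
      by (simp add: abs_mult abs_le_iff flip: abs_mult)
    then have "- (N/2) \<le> (e/2 * of_int x) * X"
      by simp
    moreover have "quad_form (noisy_effect e n x) v0 v1 = N/2 + (e/2 * of_int x) * X"
      unfolding quad_form_def noisy_effect_nth N_def X_def coords
      by (simp add: power2_eq_square field_simps)
    ultimately show ?thesis by linarith
  qed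
  then show ?thesis
    using noisy_effect_hermitian by (simp add: psd_iff_quad_form)
qed

lemma mat_1_minus_noisy_effect: "mat 1 - noisy_effect e n x = noisy_effect e n (- x)"
  by (simp add: cmat_eq_iff noisy_effect_nth mat_def)

lemma noisy_effect_add_flip: "noisy_effect e n x + noisy_effect e n (- x) = mat 1"
  by (metis mat_1_minus_noisy_effect diff_add_cancel add.commute)

lemma trace_noisy_effect: "trace (noisy_effect e n x) = 1"
  by (simp add: trace_cmat noisy_effect_nth)

lemma noisy_effect_decomp:
  "noisy_effect e n x = ((1 + e)/2) *\<^sub>R noisy_effect 1 n x + ((1 - e)/2) *\<^sub>R noisy_effect 1 n (- x)"
  by (simp add: cmat_eq_iff noisy_effect_nth) (simp add: scaleR_conv_of_real complex_eq_iff field_simps)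

lemma noisy_effect_half_mix:
  "(1/2) *\<^sub>R noisy_effect 1 n x + (1/2) *\<^sub>R noisy_effect 1 n (- x) = (1/2) *\<^sub>R mat 1"
  by (metis noisy_effect_add_flip scaleR_add_right)

lemma trace_projector_orthogonal:
  assumes "norm n = 1" "x \<in> {1, -1}"
  shows "Re (trace (noisy_effect 1 n x ** noisy_effect 1 n (- x))) = 0"
proof -
  have "Re (trace (noisy_effect 1 n x ** noisy_effect 1 n (- x))) =
      1/2 - (real_of_int x)^2/2 * ((n$0)^2 + (n$1)^2 + (n$2)^2)"
    by (simp add: trace_cmat matrix_matrix_mult_def sum_UNIV_2_zero_one noisy_effect_nth)
       (simp add: power2_eq_square field_simps)
  then show ?thesis
    using assms norm_eq_1_components by auto
qed

lemma is_effect_projector: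
  assumes "norm n = 1" "x \<in> {1, -1}"
  shows "is_effect (noisy_effect 1 n x)"
  using assms psd_noisy_effect[OF assms(1)]
  by (auto simp: is_effect_def mat_1_minus_noisy_effect)

lemma is_density_projector:
  assumes "norm n = 1" "x \<in> {1, -1}"
  shows "is_density (noisy_effect 1 n x)"
  using is_effect_projector[OF assms] trace_noisy_effect by (simp add: is_density_def is_effect_def)

definition pair_outcomes :: "outcome set" where
  "pair_outcomes = {[a, b] | a b. a \<in> {1, -1} \<and> b \<in> {1, -1}}"

lemma pair_outcomes_eq: "pair_outcomes = {[1, 1], [1, -1], [-1, 1], [-1, -1]}"
  unfolding pair_outcomes_def by auto

lemma sum_pair_outcomes: "sum f pair_outcomes = f [1, 1] + f [1, -1] + f [-1, 1] + f [-1, -1]"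
  by (simp add: pair_outcomes_eq add.assoc)

locale noncontextual_qubit_model =
  fixes L :: "'l measure" and dens :: "'p \<Rightarrow> cmat"
    and outs :: "'m \<Rightarrow> outcome set" and povm :: "'m \<Rightarrow> outcome \<Rightarrow> cmat"
    and \<mu> :: "'p \<Rightarrow> 'l measure" and \<xi> :: "'m \<Rightarrow> outcome \<Rightarrow> 'l \<Rightarrow> real"
  assumes operational_theory: "qubit_operational_theory dens outs povm"
    and model: "ontological_model L dens outs povm \<mu> \<xi>"
    and noncontextual: "generalized_noncontextual dens outs povm \<mu> \<xi>"
begin

lemma is_density_dens: "is_density (dens P)"
  using operational_theory by (simp add: qubit_operational_theory_def)

lemma preparation_exists: "is_density \<rho> \<Longrightarrow> \<exists>P. dens P = \<rho>"
  using operational_theory by (simp add: qubit_operational_theory_def)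

lemma povm_outside: "x \<notin> outs M \<Longrightarrow> povm M x = 0"
  using operational_theory by (simp add: qubit_operational_theory_def)

lemma measurement_exists:
  "finite Os \<Longrightarrow> Os \<noteq> {} \<Longrightarrow> (\<forall>x\<in>Os. is_effect (E x)) \<Longrightarrow> sum E Os = mat 1 \<Longrightarrow>
    \<exists>M. outs M = Os \<and> (\<forall>x\<in>Os. povm M x = E x)"
  using operational_theory unfolding qubit_operational_theory_def by blast

lemma prob_space_\<mu>: "prob_space (\<mu> P)"
  using model by (simp add: ontological_model_def)

lemma sets_\<mu>[measurable_cong]: "sets (\<mu> P) = sets L"
  using model by (simp add: ontological_model_def)

lemma space_\<mu>: "space (\<mu> P) = space L"
  using sets_\<mu> by (rule sets_eq_imp_space_eq)

lemma response_measurable[measurable]: "\<xi> M x \<in> borel_measurable L"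
  using model by (simp add: ontological_model_def)

lemma response_nonneg: "0 \<le> \<xi> M x l"
  using model by (simp add: ontological_model_def)

lemma response_sum: "l \<in> space L \<Longrightarrow> (\<Sum>x\<in>outs M. \<xi> M x l) = 1"
  using model by (simp add: ontological_model_def)

lemma integral_response:
  "x \<in> outs M \<Longrightarrow> (\<integral>l. \<xi> M x l \<partial>\<mu> P) = Re (trace (dens P ** povm M x))"
  using model by (simp add: ontological_model_def)

lemma preparation_mixture_exists:
  "0 \<le> t \<Longrightarrow> t \<le> 1 \<Longrightarrow> \<exists>P. dens P = t *\<^sub>R dens P1 + (1 - t) *\<^sub>R dens P2 \<and>
     (\<forall>A\<in>sets L. measure (\<mu> P) A = t * measure (\<mu> P1) A + (1 - t) * measure (\<mu> P2) A)"
  using model unfolding ontological_model_def by blast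

lemma measurement_mixture_exists:
  "0 \<le> t \<Longrightarrow> t \<le> 1 \<Longrightarrow> \<exists>M. outs M = outs M1 \<union> outs M2 \<and>
     povm M = (\<lambda>x. t *\<^sub>R povm M1 x + (1 - t) *\<^sub>R povm M2 x) \<and>
     \<xi> M = (\<lambda>x l. t * \<xi> M1 x l + (1 - t) * \<xi> M2 x l)"
  using model unfolding ontological_model_def by blast

lemma coarse_graining_exists:
  "\<exists>M'. outs M' = g ` outs M \<and>
     povm M' = (\<lambda>y. \<Sum>x\<in>{x\<in>outs M. g x = y}. povm M x) \<and>
     \<xi> M' = (\<lambda>y l. \<Sum>x\<in>{x\<in>outs M. g x = y}. \<xi> M x l)"
  using model unfolding ontological_model_def by blast

lemma \<mu>_eq_if_dens_eq: "dens P1 = dens P2 \<Longrightarrow> \<mu> P1 = \<mu> P2"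
  using noncontextual
  unfolding generalized_noncontextual_def preparation_noncontextual_def by blast

lemma \<xi>_eq_if_povm_eq: "outs M1 = outs M2 \<Longrightarrow> povm M1 = povm M2 \<Longrightarrow> \<xi> M1 = \<xi> M2"
  using noncontextual
  unfolding generalized_noncontextual_def measurement_noncontextual_def by blast

definition realizes_binary_povm :: "'m \<Rightarrow> (int \<Rightarrow> cmat) \<Rightarrow> bool" where
  "realizes_binary_povm M E \<longleftrightarrow> outs M = {[1], [-1]} \<and> (\<forall>a\<in>{1, -1}. povm M [a] = E a)"

lemma response_eq_if_realize_same:
  assumes "realizes_binary_povm M E" "realizes_binary_povm M' E"
  shows "\<xi> M = \<xi> M'"
proof (rule \<xi>_eq_if_povm_eq)
  show outs_eq: "outs M = outs M'"
    using assms by (simp add: realizes_binary_povm_def)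
  show "povm M = povm M'"
  proof
    fix x
    show "povm M x = povm M' x"
    proof (cases "x \<in> outs M")
      case True
      then obtain a where "a \<in> {1, -1}" "x = [a]"
        using assms(1) by (auto simp: realizes_binary_povm_def)
      then show ?thesis
        using assms unfolding realizes_binary_povm_def by metis
    next
      case False
      then show ?thesis
        using povm_outside outs_eq by metis
    qed
  qed
qed

lemma binary_response_sum:
  "realizes_binary_povm M E \<Longrightarrow> l \<in> space L \<Longrightarrow> \<xi> M [1] l + \<xi> M [-1] l = 1"
  using response_sum[of l M] by (simp add: realizes_binary_povm_def)

lemma binary_measurement_exists:
  assumes "\<forall>a\<in>{1, -1}. is_effect (E a)" "E 1 + E (-1) = mat 1"
  shows "\<exists>M. realizes_binary_povm M E"
proof -
  obtain M where "outs M = {[1], [-1]}" "\<forall>x\<in>{[1], [-1]}. povm M x = E (hd x)"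
    using measurement_exists[of "{[1], [-1]}" "\<lambda>x. E (hd x)"] assms by auto
  then show ?thesis
    by (auto simp: realizes_binary_povm_def)
qed

lemma projective_measurement_exists: "norm n = 1 \<Longrightarrow> \<exists>M. realizes_binary_povm M (noisy_effect 1 n)"
  by (rule binary_measurement_exists) (auto simp: is_effect_projector noisy_effect_add_flip)

lemma binary_coarse_graining_exists:
  assumes "f ` outs M = {1, -1}"
  shows "\<exists>M'. realizes_binary_povm M' (\<lambda>a. \<Sum>x\<in>{x\<in>outs M. f x = a}. povm M x) \<and>
    (\<forall>a l. \<xi> M' [a] l = (\<Sum>x\<in>{x\<in>outs M. f x = a}. \<xi> M x l))"
proof -
  obtain M' where M': "outs M' = (\<lambda>x. [f x]) ` outs M"
    "povm M' = (\<lambda>y. \<Sum>x\<in>{x\<in>outs M. [f x] = y}. povm M x)"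
    "\<xi> M' = (\<lambda>y l. \<Sum>x\<in>{x\<in>outs M. [f x] = y}. \<xi> M x l)"
    using coarse_graining_exists by blast
  have "outs M' = (\<lambda>a. [a]) ` f ` outs M"
    unfolding M'(1) by (simp add: image_image)
  also have "\<dots> = {[1], [-1]}"
    using assms by simp
  finally have "realizes_binary_povm M' (\<lambda>a. \<Sum>x\<in>{x\<in>outs M. f x = a}. povm M x)"
    by (simp add: realizes_binary_povm_def M'(2))
  then show ?thesis
    by (auto simp: M'(3))
qed

lemma flipped_measurement_exists:
  assumes "realizes_binary_povm M E"
  shows "\<exists>M'. realizes_binary_povm M' (\<lambda>a. E (- a)) \<and> (\<forall>a\<in>{1, -1}. \<forall>l. \<xi> M' [a] l = \<xi> M [- a] l)"
proof -
  have outs: "outs M = {[1], [-1]}"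
    using assms by (simp add: realizes_binary_povm_def)
  have flip: "{x\<in>outs M. - hd x = a} = {[- a]}" if "a \<in> {1, -1}" for a
    using that unfolding outs by auto
  have "(\<lambda>x. - hd x) ` outs M = {1, -1}"
    unfolding outs by auto
  then obtain M' where M': "realizes_binary_povm M' (\<lambda>a. \<Sum>x\<in>{x\<in>outs M. - hd x = a}. povm M x)"
    "\<forall>a l. \<xi> M' [a] l = (\<Sum>x\<in>{x\<in>outs M. - hd x = a}. \<xi> M x l)"
    using binary_coarse_graining_exists by blast
  have "povm M' [a] = E (- a)" if "a \<in> {1, -1}" for a
  proof -
    from that have "- a \<in> {1, -1}" by auto
    have "povm M' [a] = (\<Sum>x\<in>{x\<in>outs M. - hd x = a}. povm M x)"
      using M'(1) that unfolding realizes_binary_povm_def by blast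
    also have "\<dots> = povm M [- a]"
      unfolding flip[OF that] by simp
    also have "\<dots> = E (- a)"
      using assms \<open>- a \<in> {1, -1}\<close> unfolding realizes_binary_povm_def by blast
    finally show ?thesis .
  qed
  then have "realizes_binary_povm M' (\<lambda>a. E (- a))"
    using M'(1) unfolding realizes_binary_povm_def by blast
  moreover have "\<xi> M' [a] l = \<xi> M [- a] l" if "a \<in> {1, -1}" for a l
    unfolding M'(2)[rule_format] flip[OF that] by simp
  ultimately show ?thesis by blast
qed

lemma mixed_measurement_exists:
  assumes "realizes_binary_povm M1 E1" "realizes_binary_povm M2 E2" "0 \<le> t" "t \<le> 1"
  shows "\<exists>M. realizes_binary_povm M (\<lambda>a. t *\<^sub>R E1 a + (1 - t) *\<^sub>R E2 a) \<and>
    \<xi> M = (\<lambda>x l. t * \<xi> M1 x l + (1 - t) * \<xi> M2 x l)"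
proof -
  obtain M where M: "outs M = outs M1 \<union> outs M2"
    "povm M = (\<lambda>x. t *\<^sub>R povm M1 x + (1 - t) *\<^sub>R povm M2 x)"
    "\<xi> M = (\<lambda>x l. t * \<xi> M1 x l + (1 - t) * \<xi> M2 x l)"
    using measurement_mixture_exists[OF assms(3,4)] by blast
  have "realizes_binary_povm M (\<lambda>a. t *\<^sub>R E1 a + (1 - t) *\<^sub>R E2 a)"
    using assms(1,2) unfolding realizes_binary_povm_def M(1,2) by simp
  with M(3) show ?thesis by blast
qed

lemma noisy_response:
  assumes "realizes_binary_povm N (noisy_effect \<eta> n)" "realizes_binary_povm M (noisy_effect 1 n)"
    and "0 \<le> \<eta>" "\<eta> \<le> 1" "a \<in> {1, -1}"
  shows "\<xi> N [a] l = (1 + \<eta>)/2 * \<xi> M [a] l + (1 - \<eta>)/2 * \<xi> M [- a] l"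
proof -
  obtain M' where M': "realizes_binary_povm M' (\<lambda>a. noisy_effect 1 n (- a))"
    "\<forall>a\<in>{1, -1}. \<forall>l. \<xi> M' [a] l = \<xi> M [- a] l"
    using flipped_measurement_exists[OF assms(2)] by blast
  have t: "0 \<le> (1 + \<eta>)/2" "(1 + \<eta>)/2 \<le> 1"
    using assms(3,4) by auto
  have t': "1 - (1 + \<eta>)/2 = (1 - \<eta>)/2"
    by (simp add: field_simps)
  obtain N' where N': "realizes_binary_povm N'
      (\<lambda>a. ((1 + \<eta>)/2) *\<^sub>R noisy_effect 1 n a + ((1 - \<eta>)/2) *\<^sub>R noisy_effect 1 n (- a))"
    "\<xi> N' = (\<lambda>x l. (1 + \<eta>)/2 * \<xi> M x l + (1 - \<eta>)/2 * \<xi> M' x l)"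
    using mixed_measurement_exists[OF assms(2) M'(1) t] unfolding t' by blast
  have "realizes_binary_povm N' (noisy_effect \<eta> n)"
    using N'(1) by (simp flip: noisy_effect_decomp)
  then have "\<xi> N = \<xi> N'"
    using assms(1) by (rule response_eq_if_realize_same[rotated])
  moreover have "\<xi> M' [a] l = \<xi> M [- a] l"
    using M'(2) assms(5) by blast
  ultimately show ?thesis
    using N'(2) by simp
qed

lemma first_marginal_exists:
  assumes "outs MJ = pair_outcomes" "is_joint_measurement (povm MJ) Ei Ej"
  shows "\<exists>M. realizes_binary_povm M Ei \<and>
    (\<forall>a\<in>{1, -1}. \<forall>l. \<xi> M [a] l = \<xi> MJ [a, 1] l + \<xi> MJ [a, -1] l)"
proof -
  have fibre: "{x\<in>outs MJ. hd x = a} = {[a, 1], [a, -1]}" if "a \<in> {1, -1}" for a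
    using that unfolding assms(1) pair_outcomes_eq by auto
  have "hd ` outs MJ = {1, -1}"
    unfolding assms(1) pair_outcomes_eq by simp
  then obtain M where M: "realizes_binary_povm M (\<lambda>a. \<Sum>x\<in>{x\<in>outs MJ. hd x = a}. povm MJ x)"
    "\<forall>a l. \<xi> M [a] l = (\<Sum>x\<in>{x\<in>outs MJ. hd x = a}. \<xi> MJ x l)"
    using binary_coarse_graining_exists by blast
  have "realizes_binary_povm M Ei"
    using M(1) assms(2) fibre by (simp add: realizes_binary_povm_def is_joint_measurement_def)
  then show ?thesis
    using M(2) fibre by auto
qed

lemma second_marginal_exists:
  assumes "outs MJ = pair_outcomes" "is_joint_measurement (povm MJ) Ei Ej"
  shows "\<exists>M. realizes_binary_povm M Ej \<and>
    (\<forall>b\<in>{1, -1}. \<forall>l. \<xi> M [b] l = \<xi> MJ [1, b] l + \<xi> MJ [-1, b] l)"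
proof -
  have fibre: "{x\<in>outs MJ. hd (tl x) = b} = {[1, b], [-1, b]}" if "b \<in> {1, -1}" for b
    using that unfolding assms(1) pair_outcomes_eq by auto
  have "(\<lambda>x. hd (tl x)) ` outs MJ = {1, -1}"
    unfolding assms(1) pair_outcomes_eq by auto
  then obtain M where M: "realizes_binary_povm M (\<lambda>b. \<Sum>x\<in>{x\<in>outs MJ. hd (tl x) = b}. povm MJ x)"
    "\<forall>b l. \<xi> M [b] l = (\<Sum>x\<in>{x\<in>outs MJ. hd (tl x) = b}. \<xi> MJ x l)"
    using binary_coarse_graining_exists by blast
  have "realizes_binary_povm M Ej"
    using M(1) assms(2) fibre by (simp add: realizes_binary_povm_def is_joint_measurement_def)
  then show ?thesis
    using M(2) fibre by auto
qed

lemma AE_iff_measure_zero: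
  assumes "Measurable.pred L \<phi>"
  shows "(AE l in \<mu> P. \<phi> l) \<longleftrightarrow> measure (\<mu> P) {l\<in>space L. \<not> \<phi> l} = 0"
proof -
  interpret prob_space "\<mu> P" by (rule prob_space_\<mu>)
  have "{l\<in>space L. \<not> \<phi> l} \<in> sets (\<mu> P)"
    unfolding sets_\<mu> using assms by measurable
  then have "(AE l in \<mu> P. \<phi> l) \<longleftrightarrow> emeasure (\<mu> P) {l\<in>space L. \<not> \<phi> l} = 0"
    by (rule AE_iff_measurable) (simp add: space_\<mu>)
  then show ?thesis
    by (simp add: emeasure_eq_measure)
qed

text \<open>Preparation noncontextuality: whatever decomposition realises \<open>Q\<close>, its ontic distribution is
  the corresponding mixture, so its null sets are the common null sets of the components.\<close>
lemma AE_preparation_mixture_iff: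
  assumes "dens Q = t *\<^sub>R dens P1 + (1 - t) *\<^sub>R dens P2" "0 < t" "t < 1" "Measurable.pred L \<phi>"
  shows "(AE l in \<mu> Q. \<phi> l) \<longleftrightarrow> (AE l in \<mu> P1. \<phi> l) \<and> (AE l in \<mu> P2. \<phi> l)"
proof -
  define N where "N = {l\<in>space L. \<not> \<phi> l}"
  have "N \<in> sets L"
    unfolding N_def using assms(4) by measurable
  obtain P where P: "dens P = t *\<^sub>R dens P1 + (1 - t) *\<^sub>R dens P2"
    "\<forall>A\<in>sets L. measure (\<mu> P) A = t * measure (\<mu> P1) A + (1 - t) * measure (\<mu> P2) A"
    using preparation_mixture_exists assms(2,3) by (metis less_eq_real_def)
  have "\<mu> Q = \<mu> P"
    using assms(1) P(1) by (intro \<mu>_eq_if_dens_eq) simp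
  then have "measure (\<mu> Q) N = t * measure (\<mu> P1) N + (1 - t) * measure (\<mu> P2) N"
    using P(2) \<open>N \<in> sets L\<close> by simp
  then show ?thesis
    using assms(2,3) unfolding AE_iff_measure_zero[OF assms(4)] N_def[symmetric]
    by (simp add: add_nonneg_eq_0_iff)
qed

lemma response_AE_zero_if_integral_zero:
  assumes "realizes_binary_povm M E" "a \<in> {1, -1}" "(\<integral>l. \<xi> M [a] l \<partial>\<mu> P) = 0"
  shows "AE l in \<mu> P. \<xi> M [a] l = 0"
proof -
  interpret prob_space "\<mu> P" by (rule prob_space_\<mu>)
  have "\<xi> M [a] l \<le> 1" if "l \<in> space L" for l
    using binary_response_sum[OF assms(1) that] response_nonneg[of M "[1]" l]
      response_nonneg[of M "[-1]" l] assms(2) by (elim insertE) auto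
  then have "integrable (\<mu> P) (\<xi> M [a])"
    by (intro integrable_const_bound[where B=1]) (auto simp: space_\<mu> response_nonneg)
  moreover have "AE l in \<mu> P. 0 \<le> \<xi> M [a] l"
    by (simp add: response_nonneg)
  ultimately show ?thesis
    using integral_nonneg_eq_0_iff_AE assms(3) by blast
qed

lemma eigenstate_response:
  assumes "realizes_binary_povm M (noisy_effect 1 n)" "norm n = 1" "a \<in> {1, -1}"
    and "dens P = noisy_effect 1 n a"
  shows "AE l in \<mu> P. \<xi> M [- a] l = 0"
proof (rule response_AE_zero_if_integral_zero[OF assms(1)])
  show "- a \<in> {1, -1}"
    using assms(3) by auto
  then have "povm M [- a] = noisy_effect 1 n (- a)" "[- a] \<in> outs M"
    using assms(1) unfolding realizes_binary_povm_def by blast+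
  then show "(\<integral>l. \<xi> M [- a] l \<partial>\<mu> P) = 0"
    using integral_response[of "[- a]" M P] trace_projector_orthogonal[OF assms(2,3)] assms(4)
    by simp
qed

lemma projective_response_deterministic:
  assumes "realizes_binary_povm M (noisy_effect 1 n)" "norm n = 1"
  shows "AE l in \<mu> P. \<exists>s\<in>{1, -1}. \<xi> M [s] l = 1 \<and> \<xi> M [- s] l = 0"
proof -
  let ?deterministic = "\<lambda>l. \<xi> M [1] l = 0 \<or> \<xi> M [-1] l = 0"
  have pred: "Measurable.pred L ?deterministic"
    by measurable
  obtain P1 P2 where P1: "dens P1 = noisy_effect 1 n 1" and P2: "dens P2 = noisy_effect 1 n (-1)"
    using preparation_exists is_density_projector[OF assms(2)] by (metis insertCI)
  obtain P' where P': "dens P' = mat 1 - dens P"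
    using preparation_exists is_density_complement is_density_dens by blast
  obtain Q where Q: "dens Q = (1/2) *\<^sub>R dens P1 + (1 - 1/2) *\<^sub>R dens P2"
    using preparation_mixture_exists[of "1/2" P1 P2] by auto
  have "AE l in \<mu> P1. ?deterministic l" "AE l in \<mu> P2. ?deterministic l"
    using eigenstate_response[OF assms, of 1 P1] eigenstate_response[OF assms, of "-1" P2] P1 P2
    by (auto elim: AE_mp)
  then have "AE l in \<mu> Q. ?deterministic l"
    using AE_preparation_mixture_iff[OF Q _ _ pred] by simp
  moreover have "dens Q = (1/2) *\<^sub>R dens P + (1 - 1/2) *\<^sub>R dens P'"
    using Q P1 P2 P' noisy_effect_half_mix[of n 1] by (simp add: scaleR_diff_right)
  ultimately have "AE l in \<mu> P. ?deterministic l"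
    using AE_preparation_mixture_iff[of Q "1/2" P P', OF _ _ _ pred] by simp
  then show ?thesis
    using AE_space[of "\<mu> P"]
  proof eventually_elim
    case (elim l)
    then have "\<xi> M [1] l + \<xi> M [-1] l = 1"
      using binary_response_sum[OF assms(1)] by (simp add: space_\<mu>)
    with elim(1) show ?case by auto
  qed
qed

text \<open>If the projective responses for \<open>ni\<close> and \<open>nj\<close> are deterministic with equal outcomes \<open>s\<close>, the
  marginals of the joint measurement give each outcome \<open>-s\<close> weight \<open>(1 - \<eta>)/2\<close>, and every
  anticorrelated outcome pair contains one of them.\<close>
lemma prob_neq_le:
  assumes joint: "outs MJ = pair_outcomes"
      "is_joint_measurement (povm MJ) (noisy_effect \<eta> ni) (noisy_effect \<eta> nj)"
    and projective: "realizes_binary_povm Mi (noisy_effect 1 ni)"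
      "realizes_binary_povm Mj (noisy_effect 1 nj)"
    and \<eta>: "0 \<le> \<eta>" "\<eta> \<le> 1" and l: "l \<in> space L"
    and si: "si \<in> {1, -1}" "\<xi> Mi [si] l = 1" "\<xi> Mi [- si] l = 0"
    and sj: "sj \<in> {1, -1}" "\<xi> Mj [sj] l = 1" "\<xi> Mj [- sj] l = 0"
  shows "prob_neq \<xi> MJ l \<le> (if si = sj then 1 - \<eta> else 1)"
proof -
  obtain Ni where Ni: "realizes_binary_povm Ni (noisy_effect \<eta> ni)"
      "\<forall>a\<in>{1, -1}. \<forall>l. \<xi> Ni [a] l = \<xi> MJ [a, 1] l + \<xi> MJ [a, -1] l"
    using first_marginal_exists[OF joint] by blast
  obtain Nj where Nj: "realizes_binary_povm Nj (noisy_effect \<eta> nj)"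
      "\<forall>b\<in>{1, -1}. \<forall>l. \<xi> Nj [b] l = \<xi> MJ [1, b] l + \<xi> MJ [-1, b] l"
    using second_marginal_exists[OF joint] by blast
  have flipped: "- si \<in> {1, -1}" "- sj \<in> {1, -1}"
    using si(1) sj(1) by auto
  have "\<xi> MJ [- si, 1] l + \<xi> MJ [- si, -1] l = \<xi> Ni [- si] l"
    by (rule Ni(2)[rule_format, OF flipped(1), symmetric])
  then have marginal_i: "\<xi> MJ [- si, 1] l + \<xi> MJ [- si, -1] l = (1 - \<eta>)/2"
    using noisy_response[OF Ni(1) projective(1) \<eta> flipped(1), of l] si(2,3) by simp
  have "\<xi> MJ [1, - sj] l + \<xi> MJ [-1, - sj] l = \<xi> Nj [- sj] l"
    by (rule Nj(2)[rule_format, OF flipped(2), symmetric])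
  then have marginal_j: "\<xi> MJ [1, - sj] l + \<xi> MJ [-1, - sj] l = (1 - \<eta>)/2"
    using noisy_response[OF Nj(1) projective(2) \<eta> flipped(2), of l] sj(2,3) by simp
  have total: "\<xi> MJ [1, 1] l + \<xi> MJ [1, -1] l + \<xi> MJ [-1, 1] l + \<xi> MJ [-1, -1] l = 1"
    using response_sum[OF l, of MJ] by (simp add: joint(1) sum_pair_outcomes)
  have "0 \<le> \<xi> MJ [1, 1] l" "0 \<le> \<xi> MJ [1, -1] l" "0 \<le> \<xi> MJ [-1, 1] l" "0 \<le> \<xi> MJ [-1, -1] l"
    by (rule response_nonneg)+
  moreover have "si = 1 \<or> si = -1" "sj = 1 \<or> sj = -1"
    using si(1) sj(1) by blast+
  ultimately show ?thesis
    using marginal_i marginal_j total unfolding prob_neq_def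
    by (elim disjE; simp; linarith)
qed

lemma average_prob_neq_le:
  fixes MJ :: "nat \<Rightarrow> nat \<Rightarrow> 'm" and M :: "nat \<Rightarrow> 'm" and s :: "nat \<Rightarrow> int"
  assumes joint: "\<And>i j. (i, j) \<in> {(1, 2), (1, 3), (2, 3)} \<Longrightarrow> outs (MJ i j) = pair_outcomes \<and>
      is_joint_measurement (povm (MJ i j)) (noisy_effect \<eta> (n i)) (noisy_effect \<eta> (n j))"
    and projective: "\<And>k. k \<in> {1, 2, 3} \<Longrightarrow> realizes_binary_povm (M k) (noisy_effect 1 (n k))"
    and \<eta>: "0 \<le> \<eta>" "\<eta> \<le> 1" and l: "l \<in> space L"
    and deterministic: "\<And>k. k \<in> {1, 2, 3} \<Longrightarrow>
      s k \<in> {1, -1} \<and> \<xi> (M k) [s k] l = 1 \<and> \<xi> (M k) [- s k] l = 0"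
  shows "(1/3) * (prob_neq \<xi> (MJ 1 2) l + prob_neq \<xi> (MJ 1 3) l + prob_neq \<xi> (MJ 2 3) l)
    \<le> 1 - \<eta> / 3"
proof -
  have pair: "prob_neq \<xi> (MJ i j) l \<le> (if s i = s j then 1 - \<eta> else 1)"
    if "(i, j) \<in> {(1, 2), (1, 3), (2, 3)}" for i j
  proof -
    have "i \<in> {1, 2, 3}" "j \<in> {1, 2, 3}"
      using that by auto
    then show ?thesis
      using joint[OF that] projective deterministic
      by (intro prob_neq_le[of "MJ i j" \<eta> "n i" "n j" "M i" "M j", OF _ _ _ _ \<eta> l]) blast+
  qed
  have "s k = 1 \<or> s k = -1" if "k \<in> {1, 2, 3}" for k
    using deterministic[OF that] by blast
  then have "s 1 = 1 \<or> s 1 = -1" "s 2 = 1 \<or> s 2 = -1" "s 3 = 1 \<or> s 3 = -1"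
    by simp_all
  moreover have "prob_neq \<xi> (MJ 1 2) l \<le> (if s 1 = s 2 then 1 - \<eta> else 1)"
      "prob_neq \<xi> (MJ 1 3) l \<le> (if s 1 = s 3 then 1 - \<eta> else 1)"
      "prob_neq \<xi> (MJ 2 3) l \<le> (if s 2 = s 3 then 1 - \<eta> else 1)"
    by (rule pair, simp)+
  ultimately show ?thesis
    using \<eta>(1) by (elim disjE; simp; linarith)
qed

end

theorem mainTheorem15:
  fixes L :: "'l measure" and dens :: "'p \<Rightarrow> cmat"
    and outs :: "'m \<Rightarrow> outcome set" and povm :: "'m \<Rightarrow> outcome \<Rightarrow> cmat"
    and \<mu> :: "'p \<Rightarrow> 'l measure" and \<xi> :: "'m \<Rightarrow> outcome \<Rightarrow> 'l \<Rightarrow> real"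
    and n :: "nat \<Rightarrow> real^3" and \<eta> :: real and MJ :: "nat \<Rightarrow> nat \<Rightarrow> 'm"
  assumes "qubit_operational_theory dens outs povm"
    and "ontological_model L dens outs povm \<mu> \<xi>"
    and "generalized_noncontextual dens outs povm \<mu> \<xi>"
    and "\<forall>k\<in>{1,2,3}. norm (n k) = 1"
    and "0 \<le> \<eta>" and "\<eta> \<le> 1"
    and "\<forall>i\<in>{1,2,3}. \<forall>j\<in>{1,2,3}. i < j \<longrightarrow>
           outs (MJ i j) = {[a, b] | a b. a \<in> {1, -1} \<and> b \<in> {1, -1}} \<and>
           is_joint_measurement (povm (MJ i j)) (noisy_effect \<eta> (n i)) (noisy_effect \<eta> (n j))"
  shows "\<forall>P. AE l in \<mu> P.
           (1/3) * (prob_neq \<xi> (MJ 1 2) l + prob_neq \<xi> (MJ 1 3) l + prob_neq \<xi> (MJ 2 3) l)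
             \<le> 1 - \<eta> / 3"
proof
  fix P
  interpret noncontextual_qubit_model L dens outs povm \<mu> \<xi>
    using assms(1-3) by unfold_locales
  have "\<forall>k\<in>{1, 2, 3::nat}. \<exists>M. realizes_binary_povm M (noisy_effect 1 (n k))"
    using assms(4) projective_measurement_exists by blast
  then obtain M where M: "\<forall>k\<in>{1, 2, 3::nat}. realizes_binary_povm (M k) (noisy_effect 1 (n k))"
    by (metis bchoice)
  have "AE l in \<mu> P. \<forall>k\<in>{1, 2, 3}. \<exists>s. s \<in> {1, -1} \<and> \<xi> (M k) [s] l = 1 \<and> \<xi> (M k) [- s] l = 0"
    using projective_response_deterministic M assms(4) by (intro AE_finite_allI) (auto simp: Bex_def)
  then show "AE l in \<mu> P. (1/3) * (prob_neq \<xi> (MJ 1 2) l + prob_neq \<xi> (MJ 1 3) l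
      + prob_neq \<xi> (MJ 2 3) l) \<le> 1 - \<eta> / 3"
    using AE_space[of "\<mu> P"]
  proof eventually_elim
    case (elim l)
    then obtain s where "\<forall>k\<in>{1, 2, 3}. s k \<in> {1, -1} \<and> \<xi> (M k) [s k] l = 1 \<and> \<xi> (M k) [- s k] l = 0"
      by (metis bchoice)
    moreover have "l \<in> space L"
      using elim(2) by (simp add: space_\<mu>)
    moreover have "outs (MJ i j) = pair_outcomes \<and>
        is_joint_measurement (povm (MJ i j)) (noisy_effect \<eta> (n i)) (noisy_effect \<eta> (n j))"
      if "(i, j) \<in> {(1, 2), (1, 3), (2, 3)}" for i j
      using assms(7) that unfolding pair_outcomes_def by auto
    ultimately show ?case
      using M assms(5,6) by (intro average_prob_neq_le[of MJ \<eta> n M _ s]) blast+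
  qed
qed

end
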